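(* Let $c_1=\frac12(\log(2\pi)-1)$, $c_2=1+\gamma$ and $c_n=\zeta(n-1)$ for $n\ge3$. Then for all complex $x$ with $|x|<1$, $$\frac1{G(1+x)}=\sum_{n=0}^\infty Y_n\!\left(-c_1,\,1!\,c_2,\dots,(-1)^n(n-1)!\,c_n\right)\frac{x^n}{n!}$$ (the $j$-th argument being $(-1)^j(j-1)!\,c_j$), and for every integer $m\ge0$, $$\left.\frac{d^m}{dx^m}\frac1{G(1+x)}\right|_{x=0}=(-1)^mY_m\!\left(c_1,1!\,c_2,\dots,(m-1)!\,c_m\right),$$ which is nonzero with the sign of $(-1)^m$. In particular $G'(1)=\frac12(\log(2\pi)-1)$.
   Context: $G$ is the Barnes double gamma function, $G(1+x)=(2\pi)^{x/2}\exp\!\left[-\tfrac12\big((1+\gamma)x^2+x\big)\right]\prod_{k=1}^\infty\left(1+\frac xk\right)^k\exp\!\left(\frac{x^2}{2k}-x\right)$. $\gamma$ is Euler's constant, $\zeta$ the Riemann zeta function. Complete (exponential) Bell polynomials: $Y_0=1$ and for $r\ge1$, $Y_r(x_1,\dots,x_r)=\sum \frac{r!}{k_1!\cdots k_r!}\prod_{j=1}^r\left(\frac{x_j}{j!}\right)^{k_j}$, the sum over all tuples of nonnegative integers $(k_1,\dots,k_r)$ with $k_1+2k_2+\cdots+rk_r=r$. *)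

theory Defs
  imports "HOL-Analysis.Analysis"
begin

text \<open>Barnes G-function on the complex plane, via the Weierstrass product
  G(1+x) = (2 pi)^(x/2) exp(-((1+gamma) x^2 + x)/2) prod_{k>=1} (1+x/k)^k exp(x^2/(2k) - x),
  with x = z - 1.\<close>
definition barnesG :: "complex \<Rightarrow> complex" where
  "barnesG z = (let x = z - 1 in
     exp (x / 2 * of_real (ln (2 * pi)))
     * exp (- ((1 + euler_mascheroni) * x\<^sup>2 + x) / 2)
     * (\<Prod>k. (1 + x / of_nat (Suc k)) ^ (Suc k) * exp (x\<^sup>2 / (2 * of_nat (Suc k)) - x)))"

definition zeta_nat :: "nat \<Rightarrow> real" where
  "zeta_nat n = (\<Sum>k. 1 / real (Suc k) ^ n)"

text \<open>Complete exponential Bell polynomial Y_r(x_1,...,x_r); the sum runs over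
  tuples (k_1,...,k_r) of naturals (encoded as functions vanishing outside {1..r})
  with k_1 + 2 k_2 + ... + r k_r = r.\<close>
definition bell_Y :: "nat \<Rightarrow> (nat \<Rightarrow> 'a::field_char_0) \<Rightarrow> 'a" where
  "bell_Y r x = (\<Sum>k \<in> {k :: nat \<Rightarrow> nat. (\<forall>j. j \<notin> {1..r} \<longrightarrow> k j = 0)
                                  \<and> (\<Sum>j=1..r. j * k j) = r}.
      fact r / (\<Prod>j=1..r. fact (k j)) * (\<Prod>j=1..r. (x j / fact j) ^ (k j)))"

definition cB :: "nat \<Rightarrow> real" where
  "cB n = (if n = 1 then (ln (2 * pi) - 1) / 2
           else if n = 2 then 1 + euler_mascheroni
           else zeta_nat (n - 1))"

end

theory Submission
  imports Defs
begin

(* For |x| < 1 the Weierstrass product for G(1+x) can be taken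
   logarithmically: expanding k log(1 + x/k) and summing over k (Tannery's theorem)
   gives  1/G(1+x) = exp A(x)  with  A(x) = sum_n (-1)^n c_n x^n / n.
   The exponential of a power series sum_j a_j x^j is the power series whose n-th
   coefficient is the "partition sum"  sum over k_1 + 2k_2 + ... = n of
   prod_j a_j^k_j / k_j!; this is exactly Y_n(1! a_1, 2! a_2, ...) / n!.
   The theorem follows: the series, the Taylor coefficients (via the fps expansion),
   their signs (from c_n > 0), and G'(1) = -A'(0) = c_1. *)


section \<open>Partition sums\<close>

text \<open>Multiplicity vectors of partitions of n into parts of size at most N:
  k j is the number of parts equal to j.\<close>
definition part_mults :: "nat \<Rightarrow> nat \<Rightarrow> (nat \<Rightarrow> nat) set" where
  "part_mults N n = {k. (\<forall>j. j \<notin> {1..N} \<longrightarrow> k j = 0) \<and> (\<Sum>j=1..N. j * k j) = n}"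

text \<open>The partition sum: the coefficient of z^n in prod_{j=1..N} exp (a j * z^j).\<close>
definition part_sum :: "(nat \<Rightarrow> 'a::field_char_0) \<Rightarrow> nat \<Rightarrow> nat \<Rightarrow> 'a" where
  "part_sum a N n = (\<Sum>k\<in>part_mults N n. \<Prod>j=1..N. a j ^ k j / fact (k j))"

lemma finite_part_mults: "finite (part_mults N n)"
proof -
  let ?ext = "\<lambda>f j. if j \<in> {1..N} then f j else (0::nat)"
  have "part_mults N n \<subseteq> ?ext ` (PiE {1..N} (\<lambda>_. {0..n}))"
  proof
    fix k assume k: "k \<in> part_mults N n"
    have "k j \<le> n" if "j \<in> {1..N}" for j
    proof -
      have "k j \<le> j * k j" using that by auto
      also have "\<dots> \<le> (\<Sum>j=1..N. j * k j)" by (rule member_le_sum) (use that in auto)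
      finally show ?thesis using k by (simp add: part_mults_def)
    qed
    hence "restrict k {1..N} \<in> PiE {1..N} (\<lambda>_. {0..n})" by auto
    moreover have "k = ?ext (restrict k {1..N})" using k by (auto simp: part_mults_def fun_eq_iff)
    ultimately show "k \<in> ?ext ` (PiE {1..N} (\<lambda>_. {0..n}))" by blast
  qed
  thus ?thesis by (rule finite_subset) (intro finite_imageI finite_PiE, auto)
qed

lemma part_mults_mono: "N \<le> M \<Longrightarrow> part_mults N n \<subseteq> part_mults M n"
proof
  assume NM: "N \<le> M"
  fix k assume k: "k \<in> part_mults N n"
  have "(\<Sum>j=1..M. j * k j) = (\<Sum>j=1..N. j * k j)"
    using k NM by (intro sum.mono_neutral_right) (auto simp: part_mults_def)
  thus "k \<in> part_mults M n" using k NM by (auto simp: part_mults_def)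
qed

text \<open>A partition of n has no part larger than n, so allowing parts beyond n changes nothing.\<close>
lemma part_mults_stable:
  assumes "n \<le> N" shows "part_mults N n = part_mults n n"
proof
  show "part_mults n n \<subseteq> part_mults N n" using assms by (rule part_mults_mono)
  show "part_mults N n \<subseteq> part_mults n n"
  proof
    fix k assume k: "k \<in> part_mults N n"
    have large: "k j = 0" if "j > n" for j
    proof (rule ccontr)
      assume "k j \<noteq> 0"
      hence "j \<in> {1..N}" using k that by (auto simp: part_mults_def)
      hence "j * k j \<le> (\<Sum>j=1..N. j * k j)" by (intro member_le_sum) auto
      hence "j * k j \<le> n" using k by (simp add: part_mults_def)
      moreover have "j \<le> j * k j" using \<open>k j \<noteq> 0\<close> by simp
      ultimately show False using that by simp
    qed
    have "(\<Sum>j=1..N. j * k j) = (\<Sum>j=1..n. j * k j)"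
      using assms large by (intro sum.mono_neutral_right) auto
    thus "k \<in> part_mults n n" using k large by (auto simp: part_mults_def)
  qed
qed

lemma part_sum_summand_extend:
  assumes "N \<le> M" "k \<in> part_mults N n"
  shows "(\<Prod>j=1..M. a j ^ k j / fact (k j)) = (\<Prod>j=1..N. (a j ^ k j / fact (k j) :: 'a::field_char_0))"
  using assms by (intro prod.mono_neutral_right) (auto simp: part_mults_def)

lemma part_sum_stable: "n \<le> N \<Longrightarrow> part_sum a N n = part_sum a n n"
  unfolding part_sum_def part_mults_stable[of n N] using part_sum_summand_extend[of n N]
  by (intro sum.cong) auto

lemma part_sum_cong: "(\<And>j. j \<in> {1..N} \<Longrightarrow> a j = b j) \<Longrightarrow> part_sum a N n = part_sum b N n"
  unfolding part_sum_def by (intro sum.cong prod.cong) auto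

lemma part_sum_nonneg:
  fixes a :: "nat \<Rightarrow> real"
  assumes "\<And>j. a j \<ge> 0"
  shows "part_sum a N n \<ge> 0"
  unfolding part_sum_def using assms by (intro sum_nonneg prod_nonneg) auto

lemma part_sum_mono:
  fixes a :: "nat \<Rightarrow> real"
  assumes "\<And>j. a j \<ge> 0" "N \<le> M"
  shows "part_sum a N n \<le> part_sum a M n"
proof -
  have "part_sum a N n = (\<Sum>k\<in>part_mults N n. \<Prod>j=1..M. a j ^ k j / fact (k j))"
    unfolding part_sum_def by (intro sum.cong refl) (metis part_sum_summand_extend[OF assms(2)])
  also have "\<dots> \<le> part_sum a M n" unfolding part_sum_def
    using assms by (intro sum_mono2 finite_part_mults part_mults_mono prod_nonneg) auto
  finally show ?thesis .
qed

lemma part_sum_le_diag: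
  fixes a :: "nat \<Rightarrow> real"
  assumes "\<And>j. a j \<ge> 0"
  shows "part_sum a N n \<le> part_sum a n n"
proof (cases "n \<le> N")
  case True thus ?thesis using part_sum_stable[OF True, of a] by simp
next
  case False thus ?thesis using part_sum_mono[OF assms, of N n] by simp
qed

lemma norm_part_sum_le:
  fixes a :: "nat \<Rightarrow> 'a::real_normed_field"
  shows "norm (part_sum a N n) \<le> part_sum (\<lambda>j. norm (a j)) N n"
  unfolding part_sum_def
  by (rule order.trans[OF norm_sum]) (simp add: prod_norm[symmetric] norm_divide norm_power)


section \<open>The generating function of partition sums\<close>

text \<open>The formal power series of exp (c * z^j).\<close>
definition exp_monom_fps :: "'a::field_char_0 \<Rightarrow> nat \<Rightarrow> 'a fps" where
  "exp_monom_fps c j = Abs_fps (\<lambda>n. if j dvd n then c ^ (n div j) / fact (n div j) else 0)"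

lemma prod_atLeast1_atMost_Suc:
  "(\<Prod>j=1..Suc N. f j) = (\<Prod>j=1..N. f j) * (f (Suc N) :: 'a::comm_monoid_mult)"
  by (simp add: atLeastAtMostSuc_conv mult.commute)

text \<open>Recursion in N: a partition with parts at most N+1 is one with parts at most N
  together with some number of parts equal to N+1.  This is a Cauchy product.\<close>
lemma part_sum_Suc:
  fixes a :: "nat \<Rightarrow> 'a::field_char_0"
  shows "part_sum a (Suc N) n
       = (\<Sum>i=0..n. part_sum a N i * fps_nth (exp_monom_fps (a (Suc N)) (Suc N)) (n - i))"
proof -
  define T where "T = (\<lambda>k. \<Prod>j=1..N. a j ^ k j / fact (k j))"
  define c where "c = a (Suc N)"
  define S where "S = {p \<in> Sigma {0..n} (part_mults N). Suc N dvd (n - fst p)}"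
  define e where "e = (\<lambda>i. c ^ ((n - i) div Suc N) / fact ((n - i) div Suc N))"
  have "(\<Sum>i=0..n. part_sum a N i * fps_nth (exp_monom_fps (a (Suc N)) (Suc N)) (n - i))
      = (\<Sum>i=0..n. \<Sum>k\<in>part_mults N i. T k * (if Suc N dvd (n - i) then e i else 0))"
    unfolding c_def T_def e_def by (simp add: part_sum_def exp_monom_fps_def sum_distrib_right)
  also have "\<dots> = (\<Sum>p\<in>Sigma {0..n} (part_mults N). if Suc N dvd (n - fst p) then T (snd p) * e (fst p) else 0)"
    by (subst sum.Sigma) (auto simp: finite_part_mults intro!: sum.cong)
  also have "\<dots> = (\<Sum>p\<in>S. T (snd p) * e (fst p))"
    unfolding S_def by (subst sum.inter_filter) (auto simp: finite_part_mults)
  also have "\<dots> = part_sum a (Suc N) n"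
    unfolding part_sum_def
  proof (rule sum.reindex_bij_witness[of _ "\<lambda>k. (n - Suc N * k (Suc N), k(Suc N := 0))"
                                          "\<lambda>p. (snd p)(Suc N := (n - fst p) div Suc N)"])
    fix p assume p: "p \<in> S"
    obtain i k where [simp]: "p = (i, k)" by (cases p)
    from p have i: "i \<le> n" and k: "k \<in> part_mults N i" and d: "Suc N dvd (n - i)"
      by (auto simp: S_def)
    have kS: "k (Suc N) = 0" using k by (auto simp: part_mults_def)
    have md: "Suc N * ((n - i) div Suc N) = n - i" using d by (rule dvd_mult_div_cancel)
    show "(n - Suc N * ((snd p)(Suc N := (n - fst p) div Suc N)) (Suc N),
           ((snd p)(Suc N := (n - fst p) div Suc N))(Suc N := 0)) = p"
      using md i kS by (auto simp: fun_eq_iff)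
    have "(\<Sum>j=1..Suc N. j * (k(Suc N := (n - i) div Suc N)) j)
        = (\<Sum>j=1..N. j * k j) + Suc N * ((n - i) div Suc N)"
      by (simp add: atLeastAtMostSuc_conv)
    also have "\<dots> = n" using k md i by (simp add: part_mults_def)
    finally show "(snd p)(Suc N := (n - fst p) div Suc N) \<in> part_mults (Suc N) n"
      using k by (auto simp: part_mults_def)
    have "(\<Prod>j=1..N. a j ^ (k(Suc N := (n - i) div Suc N)) j / fact ((k(Suc N := (n - i) div Suc N)) j)) = T k"
      unfolding T_def by (intro prod.cong) auto
    thus "(\<Prod>j=1..Suc N. a j ^ ((snd p)(Suc N := (n - fst p) div Suc N)) j
              / fact (((snd p)(Suc N := (n - fst p) div Suc N)) j)) = T (snd p) * e (fst p)"
      by (simp add: prod_atLeast1_atMost_Suc c_def e_def)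
  next
    fix k assume k: "k \<in> part_mults (Suc N) n"
    hence sum: "(\<Sum>j=1..N. j * k j) + Suc N * k (Suc N) = n"
      by (simp add: part_mults_def atLeastAtMostSuc_conv)
    have e1: "n - (n - Suc N * k (Suc N)) = Suc N * k (Suc N)" using sum by linarith
    have e2: "(Suc N * k (Suc N)) div Suc N = k (Suc N)" by (rule nonzero_mult_div_cancel_left) simp
    show "(\<lambda>p. (snd p)(Suc N := (n - fst p) div Suc N)) ((\<lambda>k. (n - Suc N * k (Suc N), k(Suc N := 0))) k) = k"
      unfolding fun_eq_iff by (simp only: prod.sel fun_upd_apply e1 e2) auto
    have "(\<Sum>j=1..N. j * (k(Suc N := 0)) j) = (\<Sum>j=1..N. j * k j)" by (intro sum.cong) auto
    then show "(\<lambda>k. (n - Suc N * k (Suc N), k(Suc N := 0))) k \<in> S"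
      using sum k unfolding S_def part_mults_def by (auto simp: dvd_def)
  qed
  finally show ?thesis ..
qed

lemma fps_nth_prod_exp_monom:
  fixes a :: "nat \<Rightarrow> 'a::field_char_0"
  shows "fps_nth (\<Prod>j=1..N. exp_monom_fps (a j) j) n = part_sum a N n"
proof (induction N arbitrary: n)
  case 0
  have "part_mults 0 n = (if n = 0 then {\<lambda>_. 0} else {})"
    by (auto simp: part_mults_def fun_eq_iff)
  thus ?case by (simp add: part_sum_def)
next
  case (Suc N)
  show ?case
    by (simp only: prod_atLeast1_atMost_Suc fps_mult_nth Suc.IH part_sum_Suc)
qed

lemma exp_monom_fps_sums:
  fixes c z :: "'a::{banach, real_normed_field}"
  assumes j: "j \<ge> 1"
  shows "(\<lambda>n. fps_nth (exp_monom_fps c j) n * z^n) sums exp (c * z^j)"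
proof -
  have sm: "strict_mono (\<lambda>n::nat. j*n)" using j by (intro strict_monoI) auto
  have "fps_nth (exp_monom_fps c j) (j*n) * z^(j*n) = (c*z^j)^n /\<^sub>R fact n" for n
  proof -
    have "fps_nth (exp_monom_fps c j) (j*n) = c^n / fact n" using j by (simp add: exp_monom_fps_def)
    moreover have "z^(j*n) = (z^j)^n" by (simp add: power_mult)
    ultimately show ?thesis by (simp add: scaleR_conv_of_real power_mult_distrib divide_inverse mult_ac)
  qed
  hence "(\<lambda>n. fps_nth (exp_monom_fps c j) (j*n) * z^(j*n)) sums exp (c*z^j)"
    using exp_converges[of "c*z^j"] by simp
  moreover have "fps_nth (exp_monom_fps c j) n * z^n = 0" if "n \<notin> range (\<lambda>n. j*n)" for n
    using that by (auto simp: exp_monom_fps_def elim!: dvdE)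
  ultimately show ?thesis
    using sums_mono_reindex[OF sm, of "\<lambda>n. fps_nth (exp_monom_fps c j) n * z^n"] by auto
qed

lemma eval_prod_exp_monom_fps:
  fixes a :: "nat \<Rightarrow> 'a::{banach, real_normed_field}"
  shows "fps_conv_radius (\<Prod>j=1..N. exp_monom_fps (a j) j) = \<infinity>
       \<and> eval_fps (\<Prod>j=1..N. exp_monom_fps (a j) j) z = (\<Prod>j=1..N. exp (a j * z^j))"
proof (induction N)
  case 0 thus ?case by simp
next
  case (Suc N)
  define P where "P = (\<Prod>j=1..N. exp_monom_fps (a j) j)"
  define E where "E = exp_monom_fps (a (Suc N)) (Suc N)"
  have sE: "(\<lambda>n. fps_nth E n * w^n) sums exp (a (Suc N) * w ^ Suc N)" for w
    unfolding E_def by (rule exp_monom_fps_sums) simp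
  have "fps_conv_radius E \<ge> \<infinity>" unfolding fps_conv_radius_def
    by (rule conv_radius_geI_ex', rule sums_summable, rule sE)
  hence rE: "fps_conv_radius E = \<infinity>" by simp
  have evE: "eval_fps E z = exp (a (Suc N) * z ^ Suc N)"
    unfolding eval_fps_def using sE by (rule sums_unique[symmetric])
  have rP: "fps_conv_radius P = \<infinity>" and evP: "eval_fps P z = (\<Prod>j=1..N. exp (a j * z^j))"
    using Suc.IH by (simp_all add: P_def)
  have "fps_conv_radius (P * E) = \<infinity>"
    using fps_conv_radius_mult[of P E] rP rE by simp
  moreover have "eval_fps (P * E) z = eval_fps P z * eval_fps E z"
    using rP rE by (intro eval_fps_mult) simp_all
  ultimately show ?case
    unfolding prod_atLeast1_atMost_Suc P_def[symmetric] E_def[symmetric] by (simp add: evP evE)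
qed

lemma part_sum_sums:
  fixes a :: "nat \<Rightarrow> 'a::{banach, real_normed_field}"
  shows "(\<lambda>n. part_sum a N n * z^n) sums exp (\<Sum>j=1..N. a j * z^j)"
proof -
  have "(\<lambda>n. fps_nth (\<Prod>j=1..N. exp_monom_fps (a j) j) n * z^n)
          sums eval_fps (\<Prod>j=1..N. exp_monom_fps (a j) j) z"
    by (rule sums_eval_fps) (use eval_prod_exp_monom_fps[of a N] in simp)
  thus ?thesis
    unfolding fps_nth_prod_exp_monom using eval_prod_exp_monom_fps[of a N z] by (simp add: exp_sum)
qed


section \<open>The exponential of a power series\<close>

text \<open>Tannery's theorem lets N go to infinity in
  part_sum_sums; the majorant is the same series for the norms, bounded by
  exp (sum_j norm (a j) * norm z ^ j).\<close>
lemma exp_power_series: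
  fixes a :: "nat \<Rightarrow> 'a::{banach, real_normed_field}"
  assumes a0: "a 0 = 0" and F: "(\<lambda>n. a n * z^n) sums F"
      and abs_conv: "summable (\<lambda>n. norm (a n) * norm z ^ n)"
  shows "(\<lambda>n. part_sum a n n * z^n) sums exp F"
proof -
  define r where "r = norm z"
  define b where "b = (\<lambda>j. norm (a j))"
  have b0: "\<And>j. b j \<ge> 0" and r0: "r \<ge> 0" by (simp_all add: b_def r_def)
  have majorant: "summable (\<lambda>n. part_sum b n n * r^n)"
  proof (rule summableI_nonneg_bounded)
    show "0 \<le> part_sum b n n * r^n" for n using part_sum_nonneg[OF b0] r0 by simp
  next
    fix M
    have "(\<Sum>n<M. part_sum b n n * r^n) = (\<Sum>n<M. part_sum b M n * r^n)"
      by (intro sum.cong refl) (subst part_sum_stable, auto)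
    also have "\<dots> \<le> (\<Sum>n. part_sum b M n * r^n)"
      using part_sum_sums[of b M r] part_sum_nonneg[OF b0] r0
      by (intro sum_le_suminf) (auto simp: sums_iff)
    also have "\<dots> = exp (\<Sum>j=1..M. b j * r^j)"
      using part_sum_sums[of b M r] by (simp add: sums_iff)
    also have "\<dots> \<le> exp (\<Sum>j. b j * r^j)"
      using abs_conv b0 r0 by (simp add: sum_le_suminf b_def r_def)
    finally show "(\<Sum>n<M. part_sum b n n * r^n) \<le> exp (\<Sum>j. b j * r^j)" .
  qed
  have bound: "norm (part_sum a N k * z^k) \<le> part_sum b k k * r^k" for N k
  proof -
    have "norm (part_sum a N k * z^k) = norm (part_sum a N k) * r^k"
      by (simp add: norm_mult norm_power r_def)
    also have "\<dots> \<le> part_sum b k k * r^k"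
    proof (rule mult_right_mono)
      have "norm (part_sum a N k) \<le> part_sum b N k" unfolding b_def by (rule norm_part_sum_le)
      also have "\<dots> \<le> part_sum b k k" by (rule part_sum_le_diag[OF b0])
      finally show "norm (part_sum a N k) \<le> part_sum b k k" .
    qed (use r0 in simp)
    finally show ?thesis .
  qed
  have tannery: "eventually (\<lambda>N. summable (\<lambda>k. norm (part_sum a N k * z^k))) sequentially \<and>
           summable (\<lambda>n. norm (part_sum a n n * z^n)) \<and>
           ((\<lambda>N. \<Sum>k. part_sum a N k * z^k) \<longlonglongrightarrow> (\<Sum>k. part_sum a k k * z^k))"
  proof (rule tannerys_theorem[where M = "\<lambda>k. part_sum b k k * r^k"])
    fix k
    have "eventually (\<lambda>N. part_sum a N k * z^k = part_sum a k k * z^k) sequentially"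
      using eventually_ge_at_top[of k] by eventually_elim (subst part_sum_stable, auto)
    thus "(\<lambda>N. part_sum a N k * z^k) \<longlonglongrightarrow> part_sum a k k * z^k" by (rule tendsto_eventually)
  next
    show "eventually (\<lambda>(k, N). norm (part_sum a N k * z^k) \<le> part_sum b k k * r^k) (at_top \<times>\<^sub>F sequentially)"
      using bound by (intro always_eventually) auto
  qed (use majorant in simp_all)
  have partial: "(\<Sum>k. part_sum a N k * z^k) = exp (\<Sum>j<Suc N. a j * z^j)" for N
  proof -
    have "{..<Suc N} = insert 0 {1..N}" by auto
    thus ?thesis using part_sum_sums[of a N z] a0 by (simp add: sums_iff)
  qed
  have "(\<lambda>N. \<Sum>k. part_sum a N k * z^k) \<longlonglongrightarrow> exp F"
    unfolding partial using F unfolding sums_def by (intro tendsto_exp LIMSEQ_Suc)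
  hence "(\<Sum>k. part_sum a k k * z^k) = exp F"
    by (rule LIMSEQ_unique[OF tannery[THEN conjunct2, THEN conjunct2]])
  moreover have "summable (\<lambda>n. part_sum a n n * z^n)"
    using summable_norm_cancel[OF tannery[THEN conjunct2, THEN conjunct1]] .
  ultimately show ?thesis by (simp add: sums_iff)
qed


section \<open>Complete Bell polynomials\<close>

lemma bell_Y_part_sum:
  fixes x :: "nat \<Rightarrow> 'a::field_char_0"
  shows "bell_Y r x = fact r * part_sum (\<lambda>j. x j / fact j) r r"
  unfolding bell_Y_def part_sum_def part_mults_def[symmetric] sum_distrib_left
  by (intro sum.cong refl) (simp add: prod_dividef)

lemma bell_Y_of_real:
  "bell_Y r (\<lambda>j. of_real (x j)) = (of_real (bell_Y r x) :: 'a::{real_field, field_char_0})"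
  unfolding bell_Y_def by (simp add: of_real_sum of_real_prod)

text \<open>Y_r((-1)^j x_j) = (-1)^r Y_r(x_j), since every monomial has total weight r.\<close>
lemma bell_Y_alternating:
  fixes y :: "nat \<Rightarrow> 'a::field_char_0"
  shows "bell_Y r (\<lambda>j. (-1)^j * y j) = (-1)^r * bell_Y r y"
  unfolding bell_Y_def sum_distrib_left
proof (intro sum.cong refl)
  fix k assume k: "k \<in> {k :: nat \<Rightarrow> nat. (\<forall>j. j \<notin> {1..r} \<longrightarrow> k j = 0) \<and> (\<Sum>j=1..r. j * k j) = r}"
  have "(\<Prod>j=1..r. ((-1)^j * y j / fact j) ^ k j) = (\<Prod>j=1..r. (-1)^(j * k j) * (y j / fact j) ^ k j)"
    by (intro prod.cong refl) (simp only: times_divide_eq_right[symmetric] power_mult_distrib power_mult)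
  also have "\<dots> = (-1)^r * (\<Prod>j=1..r. (y j / fact j) ^ k j)"
    using k by (simp add: prod.distrib power_sum[symmetric])
  finally show "fact r / (\<Prod>j=1..r. fact (k j)) * (\<Prod>j=1..r. ((-1)^j * y j / fact j) ^ k j)
      = (-1)^r * (fact r / (\<Prod>j=1..r. fact (k j)) * (\<Prod>j=1..r. (y j / fact j) ^ k j))" by simp
qed

text \<open>With positive arguments every term is positive, and the partition of r into one
  part r (or the empty partition if r = 0) contributes.\<close>
lemma bell_Y_pos:
  fixes y :: "nat \<Rightarrow> real"
  assumes "\<And>j. j \<ge> 1 \<Longrightarrow> y j > 0"
  shows "bell_Y r y > 0"
proof -
  define k0 where "k0 = (\<lambda>j. if j = r \<and> 0 < r then 1 else (0::nat))"
  have "(\<Sum>j=1..r. j * k0 j) = r"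
    by (cases "r = 0") (simp_all add: k0_def if_distrib cong: if_cong)
  hence k0: "k0 \<in> part_mults r r" by (auto simp: part_mults_def k0_def)
  have "0 < part_sum (\<lambda>j. y j / fact j) r r"
    unfolding part_sum_def
    by (rule sum_pos2[OF finite_part_mults k0])
       (use assms in \<open>auto intro!: prod_pos prod_nonneg divide_nonneg_nonneg simp: less_imp_le\<close>)
  thus ?thesis by (simp add: bell_Y_part_sum)
qed


section \<open>The logarithm of the Barnes G-function\<close>

lemma zeta_nat_summable: "2 \<le> s \<Longrightarrow> summable (\<lambda>k. 1 / real (Suc k) ^ s)"
  using inverse_power_summable[of s, THEN summable_Suc_iff[THEN iffD2]]
  by (simp add: inverse_eq_divide)

text \<open>The constants c_n are positive; c_1 > 0 because 2 pi > e.\<close>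
lemma cB_pos: "j \<ge> 1 \<Longrightarrow> cB j > 0"
proof -
  assume j: "j \<ge> 1"
  consider "j = 1" | "j = 2" | "j \<ge> 3" using j by linarith
  thus ?thesis
  proof cases
    case 1
    have "exp 1 < 2 * pi" using pi_gt3 exp_le by simp
    hence "ln (exp 1) < ln (2 * pi)" by (intro ln_less_cancel_iff[THEN iffD2]) auto
    thus ?thesis using 1 by (simp add: cB_def)
  next
    case 2 thus ?thesis using euler_mascheroni_pos by (simp add: cB_def)
  next
    case 3
    have "0 < zeta_nat (j - 1)" unfolding zeta_nat_def
      using 3 by (intro suminf_pos zeta_nat_summable) auto
    thus ?thesis using 3 by (simp add: cB_def)
  qed
qed

text \<open>Coefficients of A(x) = log (1 / G(1+x)) = sum_n (-1)^n c_n x^n / n.\<close>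
definition barnes_coeff :: "nat \<Rightarrow> complex" where
  "barnes_coeff n = of_real ((-1)^n * cB n / real n)"

definition barnes_fps :: "complex fps" where
  "barnes_fps = Abs_fps barnes_coeff"

text \<open>The logarithm of the m-th Weierstrass factor, and its Taylor terms of degree n
  (those of degree 1 and 2 cancel against the exponential convergence factor).\<close>
definition log_factor :: "complex \<Rightarrow> nat \<Rightarrow> complex" where
  "log_factor z m = of_nat m * ln (1 + z / of_nat m) + z\<^sup>2 / (2 * of_nat m) - z"

definition log_factor_term :: "complex \<Rightarrow> nat \<Rightarrow> nat \<Rightarrow> complex" where
  "log_factor_term z m n = (if 3 \<le> n then - ((-z)^n) / of_nat n * (1 / of_nat m ^ (n - 1)) else 0)"

text \<open>From the series of ln (1 + w): the degree >= 3 part of m ln (1 + z/m).\<close>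
lemma log_factor_sums:
  assumes z: "norm z < 1" and m: "m \<ge> 1"
  shows "log_factor_term z m sums log_factor z m"
proof -
  define w where "w = z / of_nat m"
  have w: "norm w < 1" using z m by (simp add: w_def norm_divide divide_less_eq)
  define g where "g = (\<lambda>n. of_nat m * (- ((-w)^n) / of_nat n))"
  have term_eq: "g n - (if n \<in> {..<3} then g n else 0) = log_factor_term z m n" for n
  proof (cases "3 \<le> n")
    case True
    have m0: "(of_nat m :: complex) \<noteq> 0" using m by simp
    have "(of_nat m :: complex) ^ n = of_nat m * of_nat m ^ (n - 1)"
      using True by (simp add: power_eq_if)
    hence "of_nat m * (- w) ^ n = (-z) ^ n / of_nat m ^ (n - 1)"
      unfolding w_def minus_divide_left power_divide using m0 by (simp add: field_simps)
    thus ?thesis using True by (simp add: g_def log_factor_term_def)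
  qed (simp add: g_def log_factor_term_def)
  have "g sums (of_nat m * ln (1 + w))" unfolding g_def by (rule sums_mult) (rule Ln_series'[OF w])
  moreover have "(\<lambda>n. if n \<in> {..<3} then g n else 0) sums (\<Sum>n\<in>{..<3}. g n)"
    by (rule sums_If_finite_set) simp
  ultimately have "(\<lambda>n. g n - (if n \<in> {..<3} then g n else 0))
                     sums (of_nat m * ln (1 + w) - (\<Sum>n\<in>{..<3}. g n))"
    by (rule sums_diff)
  moreover have "(\<Sum>n\<in>{..<3}. g n) = z - z\<^sup>2 / (2 * of_nat m)"
    using m by (simp add: g_def w_def eval_nat_numeral power2_eq_square field_simps)
  moreover have "(\<lambda>n. g n - (if n \<in> {..<3} then g n else 0)) = log_factor_term z m"
    using term_eq by (rule ext)
  ultimately show ?thesis by (simp add: log_factor_def w_def algebra_simps)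
qed

lemma exp_log_factor:
  assumes z: "norm z < 1" and m: "m \<ge> 1"
  shows "(1 + z / of_nat m) ^ m * exp (z\<^sup>2 / (2 * of_nat m) - z) = exp (log_factor z m)"
proof -
  have "norm (z / of_nat m) < 1" using z m by (simp add: norm_divide divide_less_eq)
  hence "1 + z / of_nat m \<noteq> 0"
    by (metis add.inverse_unique norm_minus_cancel norm_one order_less_irrefl)
  hence "exp (of_nat m * ln (1 + z / of_nat m)) = (1 + z / of_nat m) ^ m"
    unfolding exp_of_nat_mult by simp
  moreover have "exp (log_factor z m) = exp (of_nat m * ln (1 + z / of_nat m)) * exp (z\<^sup>2 / (2 * of_nat m) - z)"
    unfolding log_factor_def by (simp add: exp_add[symmetric] algebra_simps)
  ultimately show ?thesis by simp
qed

lemma log_factor_term_sums: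
  "(\<lambda>k. log_factor_term z (Suc k) n) sums (if 3 \<le> n then - (barnes_coeff n * z^n) else 0)"
proof (cases "3 \<le> n")
  case True
  have "(\<lambda>k. 1 / real (Suc k) ^ (n - 1)) sums zeta_nat (n - 1)"
    unfolding zeta_nat_def using True by (intro summable_sums zeta_nat_summable) auto
  hence "(\<lambda>k. - ((-z)^n) / of_nat n * of_real (1 / real (Suc k) ^ (n - 1)))
           sums (- ((-z)^n) / of_nat n * of_real (zeta_nat (n - 1)))"
    by (intro sums_mult sums_of_real)
  thus ?thesis using True
    by (simp add: log_factor_term_def barnes_coeff_def cB_def power_minus[of z] ac_simps)
qed (simp add: log_factor_term_def)

text \<open>Uniform bound making the double series over (m, n) absolutely convergent.\<close>
lemma norm_log_factor_term_le: "norm (log_factor_term z (Suc k) n) \<le> norm z ^ n * (1 / real (Suc k) ^ 2)"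
proof (cases "3 \<le> n")
  case True
  have "norm (log_factor_term z (Suc k) n) = norm z ^ n / real n * (1 / real (Suc k) ^ (n - 1))"
    using True by (simp add: log_factor_term_def norm_mult norm_divide norm_power del: of_nat_Suc)
  also have "\<dots> \<le> norm z ^ n * (1 / real (Suc k) ^ (n - 1))"
  proof (rule mult_right_mono)
    have "norm z ^ n * 1 \<le> norm z ^ n * real n" using True by (intro mult_left_mono) auto
    thus "norm z ^ n / real n \<le> norm z ^ n" using True by (simp add: divide_le_eq)
  qed simp
  also have "\<dots> \<le> norm z ^ n * (1 / real (Suc k) ^ 2)"
  proof (intro mult_left_mono divide_left_mono)
    show "real (Suc k) ^ 2 \<le> real (Suc k) ^ (n - 1)" using True by (intro power_increasing) auto
  qed auto
  finally show ?thesis .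
qed (simp add: log_factor_term_def)

text \<open>Interchanging the sums over factors m and degrees n (Tannery's theorem with the
  majorant norm z ^ n * zeta 2).\<close>
lemma log_factor_series:
  assumes z: "norm z < 1"
  defines "t \<equiv> \<lambda>n. if 3 \<le> n then barnes_coeff n * z^n else 0"
  shows "summable t \<and> (\<lambda>k. log_factor z (Suc k)) sums - (\<Sum>n. t n)"
proof -
  have T: "summable (\<lambda>n. norm (- t n)) \<and>
           ((\<lambda>M. \<Sum>n. \<Sum>k<M. log_factor_term z (Suc k) n) \<longlonglongrightarrow> (\<Sum>n. - t n))"
  proof (rule conjunct2[OF tannerys_theorem[where M = "\<lambda>n. norm z ^ n * zeta_nat 2"]])
    fix n show "(\<lambda>M. \<Sum>k<M. log_factor_term z (Suc k) n) \<longlonglongrightarrow> - t n"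
      using log_factor_term_sums[of z n] by (cases "3 \<le> n") (simp_all add: sums_def t_def)
  next
    have "norm (\<Sum>k<M. log_factor_term z (Suc k) n) \<le> norm z ^ n * zeta_nat 2" for M n
    proof -
      have "norm (\<Sum>k<M. log_factor_term z (Suc k) n) \<le> (\<Sum>k<M. norm z ^ n * (1 / real (Suc k) ^ 2))"
        by (rule order.trans[OF norm_sum sum_mono[OF norm_log_factor_term_le]])
      also have "\<dots> \<le> norm z ^ n * zeta_nat 2"
        unfolding sum_distrib_left[symmetric] zeta_nat_def
        by (intro mult_left_mono sum_le_suminf zeta_nat_summable) auto
      finally show ?thesis .
    qed
    thus "eventually (\<lambda>(n, M). norm (\<Sum>k<M. log_factor_term z (Suc k) n) \<le> norm z ^ n * zeta_nat 2)
            (at_top \<times>\<^sub>F sequentially)"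
      by (intro always_eventually) auto
  next
    show "summable (\<lambda>n. norm z ^ n * zeta_nat 2)" using z by (intro summable_mult2 summable_geometric) simp
  qed auto
  have "(\<Sum>n. \<Sum>k<M. log_factor_term z (Suc k) n) = (\<Sum>k<M. log_factor z (Suc k))" for M
  proof -
    have "(\<Sum>n. \<Sum>k<M. log_factor_term z (Suc k) n) = (\<Sum>k<M. \<Sum>n. log_factor_term z (Suc k) n)"
      using log_factor_sums[OF z] by (intro suminf_sum) (auto simp: sums_iff)
    also have "\<dots> = (\<Sum>k<M. log_factor z (Suc k))"
      using log_factor_sums[OF z] by (intro sum.cong refl) (auto simp: sums_iff)
    finally show ?thesis .
  qed
  hence "(\<lambda>k. log_factor z (Suc k)) sums (\<Sum>n. - t n)"
    using T unfolding sums_def by simp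
  moreover have "summable t"
    using summable_minus[OF summable_norm_cancel[OF T[THEN conjunct1]]] by simp
  ultimately show ?thesis by (simp add: suminf_minus)
qed

text \<open>The constant, linear and quadratic factors of the product
  supply the terms of degree 1 and 2 of A; the log factors supply the rest.\<close>
lemma barnesG_log_expansion:
  assumes z: "norm z < 1"
  shows "(\<lambda>n. barnes_coeff n * z^n) sums eval_fps barnes_fps z
       \<and> barnesG (1 + z) = exp (- eval_fps barnes_fps z)"
proof -
  define t where "t = (\<lambda>n. if 3 \<le> n then barnes_coeff n * z^n else 0)"
  from log_factor_series[OF z] have t: "summable t"
    and logs: "(\<lambda>k. log_factor z (Suc k)) sums - (\<Sum>n. t n)" by (simp_all add: t_def)
  have "(\<lambda>n. (if n \<in> {..<3} then barnes_coeff n * z^n else 0) + t n)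
          sums ((\<Sum>n<3. barnes_coeff n * z^n) + (\<Sum>n. t n))"
    by (intro sums_add sums_If_finite_set summable_sums t) simp
  moreover have "(\<lambda>n. (if n \<in> {..<3} then barnes_coeff n * z^n else 0) + t n)
               = (\<lambda>n. barnes_coeff n * z^n)" by (auto simp: t_def)
  ultimately have S: "(\<lambda>n. barnes_coeff n * z^n) sums ((\<Sum>n<3. barnes_coeff n * z^n) + (\<Sum>n. t n))"
    by simp
  hence ev: "eval_fps barnes_fps z = (\<Sum>n<3. barnes_coeff n * z^n) + (\<Sum>n. t n)"
    by (simp add: eval_fps_def barnes_fps_def sums_iff)
  have "(\<Prod>k. (1 + z / of_nat (Suc k)) ^ (Suc k) * exp (z\<^sup>2 / (2 * of_nat (Suc k)) - z))
      = (\<Prod>k. exp (log_factor z (Suc k)))"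
    using exp_log_factor[OF z] by (metis le_add1 plus_1_eq_Suc)
  also have "\<dots> = exp (- (\<Sum>n. t n))"
    using logs by (simp add: prodinf_exp sums_iff)
  finally have "barnesG (1 + z) = exp (z / 2 * of_real (ln (2 * pi)))
      * exp (- ((1 + euler_mascheroni) * z\<^sup>2 + z) / 2) * exp (- (\<Sum>n. t n))"
    unfolding barnesG_def Let_def by simp
  also have "\<dots> = exp (z / 2 * of_real (ln (2 * pi)) + (- ((1 + euler_mascheroni) * z\<^sup>2 + z) / 2)
                         + (- (\<Sum>n. t n)))"
    by (simp only: exp_add)
  also have "z / 2 * of_real (ln (2 * pi)) + (- ((1 + euler_mascheroni) * z\<^sup>2 + z) / 2) + (- (\<Sum>n. t n))
           = - eval_fps barnes_fps z"
    unfolding ev by (simp add: eval_nat_numeral barnes_coeff_def cB_def of_real_euler_mascheroni field_simps)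
  finally show ?thesis using S ev by simp
qed

lemma barnes_fps_radius: "fps_conv_radius barnes_fps \<ge> 1"
  unfolding fps_conv_radius_def
proof (rule conv_radius_geI_ex')
  fix r :: real assume "0 < r" "ereal r < 1"
  thus "summable (\<lambda>n. fps_nth barnes_fps n * of_real r ^ n)"
    using barnesG_log_expansion[of "of_real r"] by (auto simp: barnes_fps_def dest: sums_summable)
qed


section \<open>The Taylor expansion of 1 / G(1+x)\<close>

text \<open>The power series of 1 / G(1+x) = exp A(x) at 0.\<close>
definition inv_barnes_fps :: "complex fps" where
  "inv_barnes_fps = Abs_fps (\<lambda>n. part_sum barnes_coeff n n)"

lemma inv_barnes_sums:
  assumes "norm z < 1"
  shows "(\<lambda>n. part_sum barnes_coeff n n * z^n) sums (1 / barnesG (1 + z))"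
proof -
  have "ereal (norm z) < 1" using assms by simp
  hence "norm z < fps_conv_radius barnes_fps" using barnes_fps_radius by (rule order.strict_trans2)
  hence "summable (\<lambda>n. norm (barnes_coeff n) * norm z ^ n)"
    using norm_summable_fps by (fastforce simp: barnes_fps_def norm_mult norm_power)
  with barnesG_log_expansion[OF assms] show ?thesis
    using exp_power_series[of barnes_coeff z] by (simp add: barnes_coeff_def exp_minus inverse_eq_divide)
qed

lemma inv_barnes_fps_expansion: "(\<lambda>x. 1 / barnesG (1 + x)) has_fps_expansion inv_barnes_fps"
  unfolding has_fps_expansion_def
proof
  have "fps_conv_radius inv_barnes_fps \<ge> 1"
    unfolding fps_conv_radius_def inv_barnes_fps_def fps_nth_Abs_fps
    by (rule conv_radius_geI_ex') (use inv_barnes_sums in \<open>force dest: sums_summable\<close>)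
  thus "0 < fps_conv_radius inv_barnes_fps" by (rule order.strict_trans2[rotated]) simp
  have "eventually (\<lambda>z::complex. z \<in> ball 0 1) (nhds 0)"
    by (intro eventually_nhds_in_open) auto
  thus "eventually (\<lambda>z. eval_fps inv_barnes_fps z = 1 / barnesG (1 + z)) (nhds 0)"
    by eventually_elim (use inv_barnes_sums in \<open>simp add: eval_fps_def inv_barnes_fps_def sums_iff\<close>)
qed

lemma bell_Y_barnes:
  "bell_Y n (\<lambda>j. of_real ((-1) ^ j * fact (j - 1) * cB j)) = fact n * part_sum barnes_coeff n n"
proof -
  have "part_sum (\<lambda>j. of_real ((-1) ^ j * fact (j - 1) * cB j) / fact j) n n = part_sum barnes_coeff n n"
  proof (rule part_sum_cong)
    fix j :: nat assume j: "j \<in> {1..n}"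
    hence "(fact j :: complex) = of_nat j * fact (j - 1)" by (intro fact_reduce) auto
    thus "of_real ((-1) ^ j * fact (j - 1) * cB j) / fact j = barnes_coeff j"
      using j by (simp add: barnes_coeff_def field_simps)
  qed
  thus ?thesis by (simp only: bell_Y_part_sum)
qed

text \<open>Near 1, G(w) = exp (-A(w - 1)), so G'(1) = -A'(0) = c_1.\<close>
lemma deriv_barnesG_1: "deriv barnesG 1 = of_real ((ln (2 * pi) - 1) / 2)"
proof -
  have r: "norm (0::complex) < fps_conv_radius barnes_fps"
    using barnes_fps_radius by (rule order.strict_trans2[rotated]) simp
  have "(eval_fps barnes_fps has_field_derivative eval_fps (fps_deriv barnes_fps) 0) (at (1 - 1))"
    using has_field_derivative_eval_fps[OF r] by simp
  hence d: "((\<lambda>w. exp (- eval_fps barnes_fps (w - 1))) has_field_derivative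
          exp (- eval_fps barnes_fps 0) * - eval_fps (fps_deriv barnes_fps) 0) (at 1)"
    by (auto intro!: derivative_eq_intros DERIV_chain2[where f = "eval_fps barnes_fps"])
  have val: "exp (- eval_fps barnes_fps 0) * - eval_fps (fps_deriv barnes_fps) 0
               = of_real ((ln (2 * pi) - 1) / 2)"
    by (simp add: eval_fps_at_0 barnes_fps_def barnes_coeff_def cB_def field_simps)
  from d[unfolded val] have "(barnesG has_field_derivative of_real ((ln (2 * pi) - 1) / 2)) (at 1)"
  proof (rule has_field_derivative_transform_within_open[where S = "ball 1 1"])
    fix w :: complex assume "w \<in> ball 1 1"
    hence "norm (w - 1) < 1" by (simp add: dist_norm norm_minus_commute)
    thus "exp (- eval_fps barnes_fps (w - 1)) = barnesG w" using barnesG_log_expansion[of "w - 1"] by simp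
  qed auto
  thus ?thesis by (rule DERIV_imp_deriv)
qed

lemma higher_deriv_inv_barnesG:
  "(deriv ^^ m) (\<lambda>x. 1 / barnesG (1 + x)) 0 = of_real ((-1) ^ m * bell_Y m (\<lambda>j. fact (j - 1) * cB j))"
proof -
  have "(deriv ^^ m) (\<lambda>x. 1 / barnesG (1 + x)) 0 = fact m * part_sum barnes_coeff m m"
    using fps_nth_fps_expansion[OF inv_barnes_fps_expansion, of m] by (simp add: inv_barnes_fps_def)
  also have "\<dots> = of_real (bell_Y m (\<lambda>j. (-1) ^ j * (fact (j - 1) * cB j)))"
    by (simp only: bell_Y_barnes[symmetric] bell_Y_of_real mult.assoc)
  also have "\<dots> = of_real ((-1) ^ m * bell_Y m (\<lambda>j. fact (j - 1) * cB j))"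
    by (simp only: bell_Y_alternating)
  finally show ?thesis .
qed

theorem mainTheorem16:
  shows "(\<forall>x::complex. norm x < 1 \<longrightarrow>
           (\<lambda>n. bell_Y n (\<lambda>j. of_real ((-1) ^ j * fact (j - 1) * cB j)) * x ^ n / fact n)
             sums (1 / barnesG (1 + x)))
       \<and> (\<forall>m::nat. (deriv ^^ m) (\<lambda>x. 1 / barnesG (1 + x)) 0
              = of_real ((-1) ^ m * bell_Y m (\<lambda>j. fact (j - 1) * cB j))
            \<and> 0 < (-1) ^ m * ((-1) ^ m * bell_Y m (\<lambda>j. fact (j - 1) * cB j)))
       \<and> deriv barnesG 1 = of_real ((ln (2 * pi) - 1) / 2)"
proof (intro conjI allI impI)
  fix x :: complex assume "norm x < 1"
  thus "(\<lambda>n. bell_Y n (\<lambda>j. of_real ((-1) ^ j * fact (j - 1) * cB j)) * x ^ n / fact n)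
          sums (1 / barnesG (1 + x))"
    unfolding bell_Y_barnes using inv_barnes_sums by simp
next
  fix m :: nat
  have "0 < bell_Y m (\<lambda>j. fact (j - 1) * cB j)" by (rule bell_Y_pos) (simp add: cB_pos)
  thus "0 < (-1) ^ m * ((-1) ^ m * bell_Y m (\<lambda>j. fact (j - 1) * cB j :: real))"
    by (simp add: mult.assoc[symmetric] power_mult_distrib[symmetric])
qed (rule higher_deriv_inv_barnesG, rule deriv_barnesG_1)

end
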